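(* Let $n\ge3$ and let $\mathbf A_1,\mathbf A_2,\mathbf A_3,\mathbf A_4$ be algebras whose only operations are ternary operations $t_1,\dots,t_{n-1}$. Suppose that for $j=1,2,3$ there is an element $0\in A_j$ with $t_h(0,y,z)=0$ for $h=1,\dots,n-2$ and $t_h(x,y,0)=0$ for $h=2,\dots,n-1$ (for all $x,y,z\in A_j$), and that in $\mathbf A_4$, $t_1$ is the projection onto the first coordinate, $t_{n-1}$ is the projection onto the third coordinate, and $t_h(x,y,x)=x$ for $h=2,\dots,n-2$. Fix $a,d\in A_4$ and let $B=B(a,d)$ be the set of elements of $E=A_1\times A_2\times A_3\times A_4$ having at least one of the forms $(\ast,0,\ast,a)$, $(0,0,\ast,\ast)$, $(0,\ast,\ast,d)$, $(\ast,\ast,0,\ast)$, where $\ast$ denotes an arbitrary element of the corresponding factor. Then $B$ is the universe of a subalgebra of $\mathbf A_1\times\mathbf A_2\times\mathbf A_3\times\mathbf A_4$. *)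

theory Defs
  imports Main
begin

definition tern_algebra :: "nat \<Rightarrow> 'a set \<Rightarrow> (nat \<Rightarrow> 'a \<Rightarrow> 'a \<Rightarrow> 'a \<Rightarrow> 'a) \<Rightarrow> bool" where
  "tern_algebra n A t \<longleftrightarrow>
     (\<forall>h\<in>{1..n-1}. \<forall>x\<in>A. \<forall>y\<in>A. \<forall>z\<in>A. t h x y z \<in> A)"

definition prod4_op ::
  "(nat \<Rightarrow> 'a \<Rightarrow> 'a \<Rightarrow> 'a \<Rightarrow> 'a) \<Rightarrow> (nat \<Rightarrow> 'b \<Rightarrow> 'b \<Rightarrow> 'b \<Rightarrow> 'b) \<Rightarrow>
   (nat \<Rightarrow> 'c \<Rightarrow> 'c \<Rightarrow> 'c \<Rightarrow> 'c) \<Rightarrow> (nat \<Rightarrow> 'd \<Rightarrow> 'd \<Rightarrow> 'd \<Rightarrow> 'd) \<Rightarrow>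
   nat \<Rightarrow> ('a \<times> 'b \<times> 'c \<times> 'd) \<Rightarrow> ('a \<times> 'b \<times> 'c \<times> 'd) \<Rightarrow> ('a \<times> 'b \<times> 'c \<times> 'd)
   \<Rightarrow> ('a \<times> 'b \<times> 'c \<times> 'd)" where
  "prod4_op t1 t2 t3 t4 h = (\<lambda>(x1,x2,x3,x4) (y1,y2,y3,y4) (z1,z2,z3,z4).
      (t1 h x1 y1 z1, t2 h x2 y2 z2, t3 h x3 y3 z3, t4 h x4 y4 z4))"

definition is_subuniverse :: "nat \<Rightarrow> 'a set \<Rightarrow> (nat \<Rightarrow> 'a \<Rightarrow> 'a \<Rightarrow> 'a \<Rightarrow> 'a) \<Rightarrow> 'a set \<Rightarrow> bool" where
  "is_subuniverse n E t B \<longleftrightarrow> B \<subseteq> E \<and>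
     (\<forall>h\<in>{1..n-1}. \<forall>x\<in>B. \<forall>y\<in>B. \<forall>z\<in>B. t h x y z \<in> B)"

end

theory Submission
  imports Defs
begin

text \<open>Each operation t_h of the product inherits zero coordinates (in the first three
  factors) from its first argument when h \<le> n-2 and from its third argument when h \<ge> 2.
  Hence t_1(x,y,w) has the zeros and the fourth coordinate of x, t_(n-1)(x,y,w) those of w,
  and for 2 \<le> h \<le> n-2 the result has the zeros of both x and w and keeps their fourth
  coordinate when the two agree. Each situation leads back into B: two members of B of
  different forms either have a zero third coordinate or jointly provide zeros in the first
  two coordinates.\<close>

definition zero_pattern :: "'a \<Rightarrow> 'b \<Rightarrow> 'c \<Rightarrow> 'd \<Rightarrow> 'd \<Rightarrow> ('a \<times> 'b \<times> 'c \<times> 'd) set" where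
  "zero_pattern z1 z2 z3 a d = {(x1, x2, x3, x4).
     (x2 = z2 \<and> x4 = a) \<or> (x1 = z1 \<and> x2 = z2) \<or> (x1 = z1 \<and> x4 = d) \<or> x3 = z3}"

lemma zero_pattern_inherit_zeros:
  assumes "(x1, x2, x3, x4) \<in> zero_pattern z1 z2 z3 a d"
    and "(w1, w2, w3, w4) \<in> zero_pattern z1 z2 z3 a d"
    and "x1 = z1 \<or> w1 = z1 \<Longrightarrow> r1 = z1"
    and "x2 = z2 \<or> w2 = z2 \<Longrightarrow> r2 = z2"
    and "x3 = z3 \<or> w3 = z3 \<Longrightarrow> r3 = z3"
    and "x4 = w4 \<Longrightarrow> r4 = x4"
  shows "(r1, r2, r3, r4) \<in> zero_pattern z1 z2 z3 a d"
  using assms unfolding zero_pattern_def by auto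

lemma zero_pattern_inherit_zeros_single:
  assumes "(x1, x2, x3, x4) \<in> zero_pattern z1 z2 z3 a d"
    and "x1 = z1 \<Longrightarrow> r1 = z1" and "x2 = z2 \<Longrightarrow> r2 = z2" and "x3 = z3 \<Longrightarrow> r3 = z3"
    and "r4 = x4"
  shows "(r1, r2, r3, r4) \<in> zero_pattern z1 z2 z3 a d"
  using zero_pattern_inherit_zeros[OF assms(1) assms(1)] assms(2-) by blast

lemma prod4_op_apply [simp]:
  "prod4_op t1 t2 t3 t4 h (x1, x2, x3, x4) (y1, y2, y3, y4) (w1, w2, w3, w4) =
     (t1 h x1 y1 w1, t2 h x2 y2 w2, t3 h x3 y3 w3, t4 h x4 y4 w4)"
  by (simp add: prod4_op_def)

lemma tern_algebra_closed:
  "tern_algebra n A t \<Longrightarrow> h \<in> {1..n-1} \<Longrightarrow> x \<in> A \<Longrightarrow> y \<in> A \<Longrightarrow> z \<in> A \<Longrightarrow> t h x y z \<in> A"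
  unfolding tern_algebra_def by blast

lemma tern_algebra_prod4:
  assumes "tern_algebra n A1 t1" "tern_algebra n A2 t2" "tern_algebra n A3 t3" "tern_algebra n A4 t4"
  shows "tern_algebra n (A1 \<times> A2 \<times> A3 \<times> A4) (prod4_op t1 t2 t3 t4)"
  unfolding tern_algebra_def
  using tern_algebra_closed[OF assms(1)] tern_algebra_closed[OF assms(2)]
    tern_algebra_closed[OF assms(3)] tern_algebra_closed[OF assms(4)]
  by fastforce

lemma is_subuniverse_Int:
  assumes "tern_algebra n E t"
    and "\<And>h x y z. h \<in> {1..n-1} \<Longrightarrow> x \<in> E \<inter> P \<Longrightarrow> y \<in> E \<inter> P \<Longrightarrow> z \<in> E \<inter> P \<Longrightarrow> t h x y z \<in> P"
  shows "is_subuniverse n E t (E \<inter> P)"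
  using assms tern_algebra_closed[OF assms(1)] unfolding is_subuniverse_def by blast

theorem theorem3p2:
  fixes n :: nat
    and A1 :: "'a set" and A2 :: "'b set" and A3 :: "'c set" and A4 :: "'d set"
    and t1 :: "nat \<Rightarrow> 'a \<Rightarrow> 'a \<Rightarrow> 'a \<Rightarrow> 'a"
    and t2 :: "nat \<Rightarrow> 'b \<Rightarrow> 'b \<Rightarrow> 'b \<Rightarrow> 'b"
    and t3 :: "nat \<Rightarrow> 'c \<Rightarrow> 'c \<Rightarrow> 'c \<Rightarrow> 'c"
    and t4 :: "nat \<Rightarrow> 'd \<Rightarrow> 'd \<Rightarrow> 'd \<Rightarrow> 'd"
    and z1 :: 'a and z2 :: 'b and z3 :: 'c
    and a d :: 'd
  assumes n3: "n \<ge> 3"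
    and alg1: "tern_algebra n A1 t1" and alg2: "tern_algebra n A2 t2"
    and alg3: "tern_algebra n A3 t3" and alg4: "tern_algebra n A4 t4"
    and z1A: "z1 \<in> A1"
    and z1L: "\<And>h y z. h \<in> {1..n-2} \<Longrightarrow> y \<in> A1 \<Longrightarrow> z \<in> A1 \<Longrightarrow> t1 h z1 y z = z1"
    and z1R: "\<And>h x y. h \<in> {2..n-1} \<Longrightarrow> x \<in> A1 \<Longrightarrow> y \<in> A1 \<Longrightarrow> t1 h x y z1 = z1"
    and z2A: "z2 \<in> A2"
    and z2L: "\<And>h y z. h \<in> {1..n-2} \<Longrightarrow> y \<in> A2 \<Longrightarrow> z \<in> A2 \<Longrightarrow> t2 h z2 y z = z2"
    and z2R: "\<And>h x y. h \<in> {2..n-1} \<Longrightarrow> x \<in> A2 \<Longrightarrow> y \<in> A2 \<Longrightarrow> t2 h x y z2 = z2"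
    and z3A: "z3 \<in> A3"
    and z3L: "\<And>h y z. h \<in> {1..n-2} \<Longrightarrow> y \<in> A3 \<Longrightarrow> z \<in> A3 \<Longrightarrow> t3 h z3 y z = z3"
    and z3R: "\<And>h x y. h \<in> {2..n-1} \<Longrightarrow> x \<in> A3 \<Longrightarrow> y \<in> A3 \<Longrightarrow> t3 h x y z3 = z3"
    and p1: "\<And>x y z. x \<in> A4 \<Longrightarrow> y \<in> A4 \<Longrightarrow> z \<in> A4 \<Longrightarrow> t4 1 x y z = x"
    and p3: "\<And>x y z. x \<in> A4 \<Longrightarrow> y \<in> A4 \<Longrightarrow> z \<in> A4 \<Longrightarrow> t4 (n-1) x y z = z"
    and idm: "\<And>h x y. h \<in> {2..n-2} \<Longrightarrow> x \<in> A4 \<Longrightarrow> y \<in> A4 \<Longrightarrow> t4 h x y x = x"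
    and aA: "a \<in> A4" and dA: "d \<in> A4"
  shows "is_subuniverse n (A1 \<times> A2 \<times> A3 \<times> A4) (prod4_op t1 t2 t3 t4)
           {(x1, x2, x3, x4) \<in> A1 \<times> A2 \<times> A3 \<times> A4.
              (x2 = z2 \<and> x4 = a) \<or> (x1 = z1 \<and> x2 = z2) \<or> (x1 = z1 \<and> x4 = d) \<or> x3 = z3}"
proof -
  let ?E = "A1 \<times> A2 \<times> A3 \<times> A4" and ?P = "zero_pattern z1 z2 z3 a d"
  have "prod4_op t1 t2 t3 t4 h (x1, x2, x3, x4) (y1, y2, y3, y4) (w1, w2, w3, w4) \<in> ?P"
    if h: "h \<in> {1..n-1}" and x: "(x1, x2, x3, x4) \<in> ?E \<inter> ?P"
      and y: "(y1, y2, y3, y4) \<in> ?E" and w: "(w1, w2, w3, w4) \<in> ?E \<inter> ?P"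
    for h x1 x2 x3 x4 y1 y2 y3 y4 w1 w2 w3 w4
  proof -
    consider "h = 1" | "h = n - 1" | "h \<in> {2..n-2}" using h n3 by fastforce
    then show ?thesis
    proof cases
      case 1
      then have "h \<in> {1..n-2}" using n3 by auto
      then show ?thesis using x y w z1L z2L z3L p1 1
        by (auto intro!: zero_pattern_inherit_zeros_single[of x1 x2 x3 x4])
    next
      case 2
      then have "h \<in> {2..n-1}" using n3 by auto
      then show ?thesis using x y w z1R z2R z3R p3 2
        by (auto intro!: zero_pattern_inherit_zeros_single[of w1 w2 w3 w4])
    next
      case 3
      then have "h \<in> {1..n-2}" "h \<in> {2..n-1}" by auto
      then show ?thesis using x y w z1L z2L z3L z1R z2R z3R idm[OF 3]
        by (auto intro!: zero_pattern_inherit_zeros[of x1 x2 x3 x4 _ _ _ _ _ w1 w2 w3 w4])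
    qed
  qed
  then have "is_subuniverse n ?E (prod4_op t1 t2 t3 t4) (?E \<inter> ?P)"
    by (intro is_subuniverse_Int tern_algebra_prod4 alg1 alg2 alg3 alg4) fastforce
  moreover have "?E \<inter> ?P = {(x1, x2, x3, x4) \<in> ?E.
      (x2 = z2 \<and> x4 = a) \<or> (x1 = z1 \<and> x2 = z2) \<or> (x1 = z1 \<and> x4 = d) \<or> x3 = z3}"
    by (auto simp: zero_pattern_def)
  ultimately show ?thesis by simp
qed

end
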